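(* Let $\beta\in[0,1)$ and let $u:\mathbb{T}_m\to\mathbb{R}$ satisfy $-\Delta_\beta u(x)\ge0$ for all $x\in\mathbb{T}_m$ and $\liminf_{x\to y}u(x)\ge0$ for every $y\in\partial\mathbb{T}_m$. Then $u(x)\ge0$ for all $x\in\mathbb{T}_m$. Moreover, if $\beta>0$, then either $u>0$ on $\mathbb{T}_m$ or $u\equiv0$ on $\mathbb{T}_m$.
   Context: Tree: for an integer $m\ge2$, $\mathbb{T}_m$ has vertices the root $\emptyset$ and all finite sequences $(\emptyset,a_1,\dots,a_k)$, $a_i\in\{0,\dots,m-1\}$; $|x|$ is the level, successors of $x$ are $(x,i)$, $\hat x$ is the immediate predecessor of $x\ne\emptyset$. A branch is an infinite sequence $(x_n)_{n\ge0}$ with $x_0=\emptyset$ and $x_{n+1}$ a successor of $x_n$; $\partial\mathbb{T}_m$ is the set of branches; for $y=(x_n)$, $\liminf_{x\to y}u(x)=\liminf_{n\to\infty}u(x_n)$. Operator: $p_\beta=1$ if $\beta=0$, $p_\beta=\beta/(1-\beta)$ if $\beta\in(0,1)$. $\Delta_\beta u(\emptyset)=\frac1m\sum_{i=0}^{m-1}u(\emptyset,i)-u(\emptyset)$ and, for $x\ne\emptyset$, $\Delta_\beta u(x)=\big(\beta u(\hat x)+\frac{1-\beta}{m}\sum_{i=0}^{m-1}u(x,i)-u(x)\big)p_\beta^{-|x|}$. *)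

theory Defs
  imports "HOL-Analysis.Analysis"
begin

text \<open>Vertices of the m-ary tree T_m: the vertex (root, a_1, ..., a_k) is encoded
  as the list [a_1, ..., a_k] with all a_i < m; the root is []. Its level is the length,
  its successors are x @ [i], its predecessor is butlast x.\<close>

definition tree_vertex :: "nat \<Rightarrow> nat list \<Rightarrow> bool" where
  "tree_vertex m x \<longleftrightarrow> (\<forall>a\<in>set x. a < m)"

definition p_beta :: "real \<Rightarrow> real" where
  "p_beta \<beta> = (if \<beta> = 0 then 1 else \<beta> / (1 - \<beta>))"

definition Delta_beta :: "nat \<Rightarrow> real \<Rightarrow> (nat list \<Rightarrow> real) \<Rightarrow> nat list \<Rightarrow> real" where
  "Delta_beta m \<beta> u x =
     (if x = [] then (\<Sum>i<m. u [i]) / real m - u []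
      else (\<beta> * u (butlast x) + (1 - \<beta>) / real m * (\<Sum>i<m. u (x @ [i])) - u x)
             * p_beta \<beta> powi (- int (length x)))"

text \<open>A branch is determined by its digit sequence f (with f n < m for all n);
  its n-th vertex is [f 0, ..., f (n-1)].\<close>

definition branch_vertex :: "(nat \<Rightarrow> nat) \<Rightarrow> nat \<Rightarrow> nat list" where
  "branch_vertex f n = map f [0..<n]"

end

theory Submission
  imports Defs
begin

text \<open>Weak minimum principle: if u is somewhere negative, walk towards the root to a vertex y at
  which u is not larger than at the parent of y. There the supersolution inequality
  \<open>\<beta> u(parent) + (1 - \<beta>) mean(u on children) \<le> u(y)\<close> forces the mean over the children of y
  to be at most u(y), so some child is again not larger than its parent. Iterating gives a
  branch along which u stays below a negative value, contradicting the boundary condition.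

  Strong minimum principle for \<open>\<beta> > 0\<close>: once \<open>u \<ge> 0\<close>, the same inequality shows that a zero
  of u propagates to all children (through the mean) and to the parent (through the
  \<open>\<beta>\<close>-term), hence over the whole connected tree.\<close>

lemma ex_le_of_mean_le:
  fixes g :: "'a \<Rightarrow> real"
  assumes "finite A" "A \<noteq> {}" and mean: "sum g A / card A \<le> c"
  shows "\<exists>i\<in>A. g i \<le> c"
proof (rule ccontr)
  assume "\<not> ?thesis"
  then have "(\<Sum>i\<in>A. c) < sum g A"
    using assms(1,2) by (intro sum_strict_mono) auto
  then have "c < sum g A / card A"
    using assms(1,2) by (simp add: less_divide_eq card_gt_0_iff mult.commute)
  with mean show False by simp
qed

lemma p_beta_pos: "0 \<le> \<beta> \<Longrightarrow> \<beta> < 1 \<Longrightarrow> 0 < p_beta \<beta>"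
  unfolding p_beta_def by auto

lemma tree_vertex_Nil [simp]: "tree_vertex m []"
  by (simp add: tree_vertex_def)

lemma tree_vertex_snoc [simp]: "tree_vertex m (x @ [i]) \<longleftrightarrow> tree_vertex m x \<and> i < m"
  by (auto simp: tree_vertex_def)

lemma tree_vertex_butlast: "tree_vertex m x \<Longrightarrow> tree_vertex m (butlast x)"
  by (auto simp: tree_vertex_def dest: in_set_butlastD)

lemma tree_vertex_branch_vertex: "tree_vertex m (branch_vertex f n) \<longleftrightarrow> (\<forall>k<n. f k < m)"
  by (auto simp: tree_vertex_def branch_vertex_def)

lemma snoc_chain_eq_map_upt:
  assumes snoc: "\<And>k. \<exists>a. Y (Suc k) = Y k @ [a]"
  shows "\<exists>f. \<forall>k. Y k = map f [0..<length (Y k)]"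
proof -
  have length_Y: "length (Y k) = length (Y 0) + k" for k
  proof (induction k)
    case (Suc k)
    obtain a where "Y (Suc k) = Y k @ [a]"
      using snoc by blast
    with Suc show ?case by simp
  qed simp
  have prefix: "\<exists>zs. Y k = Y j @ zs" if "j \<le> k" for j k
    using that
  proof (induction k rule: dec_induct)
    case (step k)
    then show ?case using snoc[of k] by (metis append.assoc)
  qed simp
  have nth_Y: "Y k ! n = Y j ! n" if "n < length (Y j)" "j \<le> k" for j k n
    using prefix[OF that(2)] that(1) by (auto simp: nth_append)
  define f where "f n = Y (Suc n) ! n" for n
  have "Y k ! n = f n" if "n < length (Y k)" for k n
  proof (cases "k \<le> Suc n")
    case True
    show ?thesis unfolding f_def by (rule nth_Y[OF that True, symmetric])
  next
    case False
    show ?thesis unfolding f_def using False length_Y[of "Suc n"] by (intro nth_Y) auto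
  qed
  then have "Y k = map f [0..<length (Y k)]" for k
    by (intro nth_equalityI) simp_all
  then show ?thesis by blast
qed

lemma ex_branch_through:
  assumes "P y0" and step: "\<And>y. P y \<Longrightarrow> \<exists>a. P (y @ [a])"
  shows "\<exists>f. \<forall>n\<ge>length y0. P (branch_vertex f n)"
proof -
  have "\<exists>c. \<forall>y. P y \<longrightarrow> P (y @ [c y])"
    using step by (intro choice) blast
  then obtain c where c: "\<And>y. P y \<Longrightarrow> P (y @ [c y])"
    by blast
  define Y where "Y k = ((\<lambda>y. y @ [c y]) ^^ k) y0" for k
  have P_Y: "P (Y k)" for k
    using \<open>P y0\<close> c by (induction k) (simp_all add: Y_def)
  have length_Y: "length (Y k) = length y0 + k" for k
    by (induction k) (simp_all add: Y_def)
  obtain f where f: "\<And>k. Y k = map f [0..<length (Y k)]"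
    using snoc_chain_eq_map_upt[of Y] by (auto simp: Y_def)
  have "P (branch_vertex f n)" if "length y0 \<le> n" for n
    using P_Y[of "n - length y0"] f[of "n - length y0"] length_Y[of "n - length y0"] that
    by (simp add: branch_vertex_def)
  then show ?thesis by blast
qed

definition le_parent :: "(nat list \<Rightarrow> real) \<Rightarrow> nat list \<Rightarrow> bool" where
  "le_parent u y \<longleftrightarrow> y = [] \<or> u y \<le> u (butlast y)"

lemma ex_le_parent_le:
  "tree_vertex m x \<Longrightarrow> \<exists>y. tree_vertex m y \<and> le_parent u y \<and> u y \<le> u x"
proof (induction x rule: rev_induct)
  case Nil
  show ?case by (intro exI[of _ "[]"]) (simp add: le_parent_def)
next
  case (snoc a x)
  show ?case
  proof (cases "u (x @ [a]) \<le> u x")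
    case True
    then show ?thesis using snoc.prems by (intro exI[of _ "x @ [a]"]) (simp add: le_parent_def)
  next
    case False
    obtain y where "tree_vertex m y" "le_parent u y" "u y \<le> u x"
      using snoc by auto
    then show ?thesis using False by (intro exI[of _ y]) simp
  qed
qed

locale supersolution =
  fixes m :: nat and \<beta> :: real and u :: "nat list \<Rightarrow> real"
  assumes m_pos: "0 < m"
    and beta_nonneg: "0 \<le> \<beta>" and beta_less_1: "\<beta> < 1"
    and Delta_nonpos: "\<And>x. tree_vertex m x \<Longrightarrow> Delta_beta m \<beta> u x \<le> 0"
begin

definition children_mean :: "nat list \<Rightarrow> real" where
  "children_mean x = (\<Sum>i<m. u (x @ [i])) / real m"

lemma children_mean_le_root: "children_mean [] \<le> u []"
  using Delta_nonpos[of "[]"] by (simp add: Delta_beta_def children_mean_def)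

lemma weighted_mean_le:
  assumes "tree_vertex m x" "x \<noteq> []"
  shows "\<beta> * u (butlast x) + (1 - \<beta>) * children_mean x \<le> u x"
proof -
  have "0 < p_beta \<beta> powi (- int (length x))"
    using p_beta_pos[OF beta_nonneg beta_less_1] by simp
  moreover have "(\<beta> * u (butlast x) + (1 - \<beta>) * children_mean x - u x)
      * p_beta \<beta> powi (- int (length x)) \<le> 0"
    using Delta_nonpos[OF assms(1)] assms(2) by (simp add: Delta_beta_def children_mean_def)
  ultimately show ?thesis by (simp add: mult_le_0_iff)
qed

lemma children_mean_le_if_le_parent:
  assumes "tree_vertex m x" "le_parent u x"
  shows "children_mean x \<le> u x"
proof (cases "x = []")
  case True
  then show ?thesis using children_mean_le_root by simp
next
  case False
  then have "\<beta> * u x \<le> \<beta> * u (butlast x)"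
    using assms(2) beta_nonneg by (simp add: le_parent_def mult_left_mono)
  then have "(1 - \<beta>) * children_mean x \<le> (1 - \<beta>) * u x"
    using weighted_mean_le[OF assms(1) False] by (simp add: algebra_simps)
  then show ?thesis using beta_less_1 by simp
qed

lemma ex_child_le: "children_mean x \<le> c \<Longrightarrow> \<exists>i<m. u (x @ [i]) \<le> c"
  using ex_le_of_mean_le[of "{..<m}" "\<lambda>i. u (x @ [i])" c] m_pos
  by (auto simp: children_mean_def)

lemma ex_branch_eventually_le:
  assumes "tree_vertex m x"
  shows "\<exists>f. (\<forall>n. f n < m) \<and> (\<forall>\<^sub>F n in sequentially. u (branch_vertex f n) \<le> u x)"
proof -
  obtain y0 where y0: "tree_vertex m y0" "le_parent u y0" "u y0 \<le> u x"
    using ex_le_parent_le[OF assms] by blast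
  define P where "P y \<longleftrightarrow> tree_vertex m y \<and> le_parent u y \<and> u y \<le> u x" for y
  have "\<exists>a. P (y @ [a])" if "P y" for y
  proof -
    obtain i where "i < m" "u (y @ [i]) \<le> u y"
      using \<open>P y\<close> children_mean_le_if_le_parent ex_child_le unfolding P_def by blast
    then show ?thesis using \<open>P y\<close> by (auto simp: P_def le_parent_def)
  qed
  then obtain f where f: "\<And>n. length y0 \<le> n \<Longrightarrow> P (branch_vertex f n)"
    using ex_branch_through[of P y0] y0 by (auto simp: P_def)
  have "f n < m" for n
    using f[of "length y0 + Suc n"] by (simp add: P_def tree_vertex_branch_vertex)
  moreover have "\<forall>\<^sub>F n in sequentially. u (branch_vertex f n) \<le> u x"
    using f by (auto simp: P_def eventually_sequentially)
  ultimately show ?thesis by blast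
qed

lemma nonneg_if_boundary_nonneg:
  assumes boundary: "\<And>f. (\<forall>n. f n < m) \<Longrightarrow> liminf (\<lambda>n. ereal (u (branch_vertex f n))) \<ge> 0"
    and "tree_vertex m x"
  shows "0 \<le> u x"
proof -
  obtain f where "\<forall>n. f n < m" "\<forall>\<^sub>F n in sequentially. u (branch_vertex f n) \<le> u x"
    using ex_branch_eventually_le[OF \<open>tree_vertex m x\<close>] by blast
  then have "0 \<le> liminf (\<lambda>n. ereal (u (branch_vertex f n)))"
    and "liminf (\<lambda>n. ereal (u (branch_vertex f n))) \<le> ereal (u x)"
    using boundary by (auto intro: Liminf_le elim: eventually_mono)
  then have "0 \<le> ereal (u x)" by (rule order_trans)
  then show ?thesis by simp
qed

end

locale nonneg_supersolution = supersolution +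
  assumes nonneg: "\<And>x. tree_vertex m x \<Longrightarrow> 0 \<le> u x"
begin

lemma child_eq_0_if_eq_0:
  assumes "tree_vertex m x" "u x = 0" "i < m"
  shows "u (x @ [i]) = 0"
proof -
  have "children_mean x \<le> 0"
  proof (cases "x = []")
    case True
    then show ?thesis using children_mean_le_root assms(2) by simp
  next
    case False
    have "0 \<le> \<beta> * u (butlast x)"
      using nonneg[OF tree_vertex_butlast[OF assms(1)]] beta_nonneg by simp
    then have "(1 - \<beta>) * children_mean x \<le> 0"
      using weighted_mean_le[OF assms(1) False] assms(2) by simp
    then show ?thesis using beta_less_1 by (simp add: mult_le_0_iff)
  qed
  moreover have "0 \<le> (\<Sum>j<m. u (x @ [j]))"
    using assms(1) by (intro sum_nonneg nonneg) simp
  ultimately have "(\<Sum>j<m. u (x @ [j])) = 0"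
    using m_pos by (simp add: children_mean_def divide_le_0_iff)
  then show ?thesis
    using assms nonneg by (subst (asm) sum_nonneg_eq_0_iff) auto
qed

lemma parent_eq_0_if_eq_0:
  assumes "0 < \<beta>" "tree_vertex m x" "x \<noteq> []" "u x = 0"
  shows "u (butlast x) = 0"
proof -
  have "0 \<le> children_mean x"
    unfolding children_mean_def using assms(2) by (intro divide_nonneg_nonneg sum_nonneg nonneg) simp_all
  then have "0 \<le> (1 - \<beta>) * children_mean x"
    using beta_less_1 by simp
  then have "\<beta> * u (butlast x) \<le> 0"
    using weighted_mean_le[OF assms(2,3)] assms(4) by simp
  then show ?thesis
    using assms(1) nonneg[OF tree_vertex_butlast[OF assms(2)]] by (simp add: mult_le_0_iff)
qed

lemma root_eq_0_if_eq_0: "0 < \<beta> \<Longrightarrow> tree_vertex m x \<Longrightarrow> u x = 0 \<Longrightarrow> u [] = 0"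
proof (induction x rule: rev_induct)
  case (snoc a x)
  then show ?case using parent_eq_0_if_eq_0[of "x @ [a]"] by simp
qed

lemma eq_0_if_root_eq_0: "u [] = 0 \<Longrightarrow> tree_vertex m x \<Longrightarrow> u x = 0"
  by (induction x rule: rev_induct) (auto intro: child_eq_0_if_eq_0)

lemma pos_or_eq_0:
  assumes "0 < \<beta>"
  shows "(\<forall>x. tree_vertex m x \<longrightarrow> 0 < u x) \<or> (\<forall>x. tree_vertex m x \<longrightarrow> u x = 0)"
proof (cases "\<exists>x. tree_vertex m x \<and> u x = 0")
  case True
  then show ?thesis using root_eq_0_if_eq_0[OF assms] eq_0_if_root_eq_0 by blast
next
  case False
  then show ?thesis using nonneg by (auto simp: order_less_le)
qed

end

theorem theorem2p1:
  fixes m :: nat and \<beta> :: real and u :: "nat list \<Rightarrow> real"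
  assumes "m \<ge> 2"
    and "0 \<le> \<beta>" and "\<beta> < 1"
    and "\<And>x. tree_vertex m x \<Longrightarrow> - Delta_beta m \<beta> u x \<ge> 0"
    and "\<And>f. (\<forall>n. f n < m) \<Longrightarrow> liminf (\<lambda>n. ereal (u (branch_vertex f n))) \<ge> 0"
  shows "(\<forall>x. tree_vertex m x \<longrightarrow> u x \<ge> 0)
    \<and> (\<beta> > 0 \<longrightarrow> (\<forall>x. tree_vertex m x \<longrightarrow> u x > 0) \<or> (\<forall>x. tree_vertex m x \<longrightarrow> u x = 0))"
proof -
  interpret supersolution m \<beta> u
    using assms(1-4) by unfold_locales auto
  have nonneg: "\<And>x. tree_vertex m x \<Longrightarrow> 0 \<le> u x"
    using nonneg_if_boundary_nonneg[OF assms(5)] by blast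
  interpret nonneg_supersolution m \<beta> u
    using nonneg by unfold_locales
  show ?thesis using nonneg pos_or_eq_0 by blast
qed

end
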